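(* Let $(\beta,\gamma)$ be antiferromagnetic and $\lambda>0$. Suppose $\mathcal{T}_1,\dots,\mathcal{T}_k$ are rooted trees with roots $\rho_1,\dots,\rho_k$, effective fields $R_1,\dots,R_k$ and magnetization gaps $M_1,\dots,M_k$. Let $\mathcal{T}$ be the tree with root $\rho$, consisting of an edge $\{\rho,u\}$ together with $\mathcal{T}_1,\dots,\mathcal{T}_k$, where the roots $\rho_1,\dots,\rho_k$ are all identified with $u$. Let $R,M$ be the effective field and magnetization gap of $\mathcal{T}$. Then $$R=\frac{1+\gamma\lambda\prod_{i=1}^kR_i}{\beta+\lambda\prod_{i=1}^kR_i},\qquad M=1-\omega(R)\Big(1+\sum_{i=1}^k(M_i-1)\Big),\qquad\text{where }\ \omega(R):=\frac{1+\beta\gamma-\beta R-\gamma/R}{1-\beta\gamma}.$$ Moreover $R\in(\gamma,1/\beta)$ and $0<\omega(R)<1$.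
   Context: A pair $(\beta,\gamma)$ with $\beta,\gamma\geq0$ is antiferromagnetic if $\beta\gamma\in[0,1)$ and at least one is nonzero. For a graph $G=(V,E)$ and $\lambda>0$, $\mu_{G;\beta,\gamma,\lambda}(\sigma)=\lambda^{|\sigma|}\beta^{m_0(\sigma)}\gamma^{m_1(\sigma)}/Z$ for $\sigma:V\to\{0,1\}$, $|\sigma|=\sum_v\sigma(v)$, $m_0,m_1$ the numbers of edges with both endpoints spin $0$, resp. spin $1$, convention $0^0=1$. For a rooted tree $\mathcal{T}$ with root $\rho$ and $\mu=\mu_{\mathcal{T};\beta,\gamma,\lambda}$, the effective field is $R_{\mathcal{T}}=\frac{1}{\lambda}\frac{\mu(\sigma(\rho)=1)}{\mu(\sigma(\rho)=0)}$ and the magnetization gap is $M_{\mathcal{T}}=\mathbf{E}_\mu[|\sigma|\mid\sigma(\rho)=1]-\mathbf{E}_\mu[|\sigma|\mid\sigma(\rho)=0]$ (counting all vertices including the root). When $\beta=0$, $1/\beta$ is interpreted as $+\infty$. *)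

theory Defs
  imports Complex_Main
begin

definition simple_graph :: "'a set \<Rightarrow> 'a set set \<Rightarrow> bool" where
  "simple_graph V E \<longleftrightarrow> finite V \<and> (\<forall>e\<in>E. e \<subseteq> V \<and> card e = 2)"

definition reach :: "'a set set \<Rightarrow> 'a \<Rightarrow> 'a \<Rightarrow> bool" where
  "reach E = (\<lambda>x y. {x, y} \<in> E)\<^sup>*\<^sup>*"

definition connected_graph :: "'a set \<Rightarrow> 'a set set \<Rightarrow> bool" where
  "connected_graph V E \<longleftrightarrow> (\<forall>x\<in>V. \<forall>y\<in>V. reach E x y)"

definition acyclic_graph :: "'a set set \<Rightarrow> bool" where
  "acyclic_graph E \<longleftrightarrow> (\<forall>x y. {x, y} \<in> E \<longrightarrow> \<not> reach (E - {{x, y}}) x y)"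

definition rooted_tree :: "'a set \<Rightarrow> 'a set set \<Rightarrow> 'a \<Rightarrow> bool" where
  "rooted_tree V E r \<longleftrightarrow> simple_graph V E \<and> r \<in> V \<and> connected_graph V E \<and> acyclic_graph E"

definition antiferro :: "real \<Rightarrow> real \<Rightarrow> bool" where
  "antiferro b g \<longleftrightarrow> b \<ge> 0 \<and> g \<ge> 0 \<and> b * g < 1 \<and> (b \<noteq> 0 \<or> g \<noteq> 0)"

(* A spin configuration sigma : V -> {0,1} is identified with the set S = sigma^{-1}(1) \<subseteq> V.
   |sigma| = card S, m_1 = #edges inside S, m_0 = #edges inside V - S.
   Powers are nat-exponent powers, so 0^0 = 1. *)
definition configs :: "'a set \<Rightarrow> 'a set set" where
  "configs V = Pow V"

definition gibbs_weight :: "real \<Rightarrow> real \<Rightarrow> real \<Rightarrow> 'a set \<Rightarrow> 'a set set \<Rightarrow> 'a set \<Rightarrow> real" where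
  "gibbs_weight b g l V E S =
     l ^ card S * b ^ card {e \<in> E. e \<subseteq> V - S} * g ^ card {e \<in> E. e \<subseteq> S}"

definition partition_fn :: "real \<Rightarrow> real \<Rightarrow> real \<Rightarrow> 'a set \<Rightarrow> 'a set set \<Rightarrow> real" where
  "partition_fn b g l V E = (\<Sum>S\<in>configs V. gibbs_weight b g l V E S)"

definition gibbs :: "real \<Rightarrow> real \<Rightarrow> real \<Rightarrow> 'a set \<Rightarrow> 'a set set \<Rightarrow> 'a set \<Rightarrow> real" where
  "gibbs b g l V E S = gibbs_weight b g l V E S / partition_fn b g l V E"

definition gibbs_prob :: "real \<Rightarrow> real \<Rightarrow> real \<Rightarrow> 'a set \<Rightarrow> 'a set set \<Rightarrow> 'a set set \<Rightarrow> real" where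
  "gibbs_prob b g l V E A = (\<Sum>S\<in>configs V \<inter> A. gibbs b g l V E S)"

definition gibbs_cond_size :: "real \<Rightarrow> real \<Rightarrow> real \<Rightarrow> 'a set \<Rightarrow> 'a set set \<Rightarrow> 'a set set \<Rightarrow> real" where
  "gibbs_cond_size b g l V E A =
     (\<Sum>S\<in>configs V \<inter> A. real (card S) * gibbs b g l V E S) / gibbs_prob b g l V E A"

definition eff_field :: "real \<Rightarrow> real \<Rightarrow> real \<Rightarrow> 'a set \<Rightarrow> 'a set set \<Rightarrow> 'a \<Rightarrow> real" where
  "eff_field b g l V E r =
     (1 / l) * (gibbs_prob b g l V E {S. r \<in> S} / gibbs_prob b g l V E {S. r \<notin> S})"

definition mag_gap :: "real \<Rightarrow> real \<Rightarrow> real \<Rightarrow> 'a set \<Rightarrow> 'a set set \<Rightarrow> 'a \<Rightarrow> real" where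
  "mag_gap b g l V E r =
     gibbs_cond_size b g l V E {S. r \<in> S} - gibbs_cond_size b g l V E {S. r \<notin> S}"

definition omega :: "real \<Rightarrow> real \<Rightarrow> real \<Rightarrow> real" where
  "omega b g R = (1 + b * g - b * R - g / R) / (1 - b * g)"

end

theory Submission
  imports Defs
begin

text \<open>
  Pin the spin of the root. Once the root's own activity is divided out, the pinned partition
  function of trees glued at a common root is multiplicative and the conditional mean size is
  additive up to the root itself; hence the tree obtained by merging the subtrees at \<open>u\<close> has
  effective field \<open>\<Prod> R\<^sub>i\<close> and magnetization gap \<open>1 + \<Sum>(M\<^sub>i - 1)\<close>. Attaching the pendant edge
  \<open>{\<rho>, u}\<close> and summing over the spin of \<open>u\<close> writes the pinned quantities at \<open>\<rho>\<close> as
  \<open>2 \<times> 2\<close> combinations of those at \<open>u\<close>. What remains is algebra in \<open>x = \<lambda> \<Prod> R\<^sub>i > 0\<close>, where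
  \<open>R = (1 + \<gamma> x) / (\<beta> + x)\<close> and \<open>\<omega>(R) = x (1 - \<beta>\<gamma>) / ((\<beta> + x)(1 + \<gamma> x))\<close>.
\<close>

definition pinned_configs :: "'a set \<Rightarrow> 'a \<Rightarrow> bool \<Rightarrow> 'a set set" where
  "pinned_configs V u c = {S. S \<subseteq> V \<and> (u \<in> S \<longleftrightarrow> c)}"

text \<open>The activity of the pinned vertex itself is divided out, so that gluing at that vertex is
  multiplicative and the effective field is the plain ratio of the two pinned partition functions.\<close>

definition pinned_partition_fn ::
    "real \<Rightarrow> real \<Rightarrow> real \<Rightarrow> 'a set \<Rightarrow> 'a set set \<Rightarrow> 'a \<Rightarrow> bool \<Rightarrow> real" where
  "pinned_partition_fn b g l V E u c =
     (\<Sum>S\<in>pinned_configs V u c. gibbs_weight b g l V E S) / (if c then l else 1)"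

definition pinned_mean_size ::
    "real \<Rightarrow> real \<Rightarrow> real \<Rightarrow> 'a set \<Rightarrow> 'a set set \<Rightarrow> 'a \<Rightarrow> bool \<Rightarrow> real" where
  "pinned_mean_size b g l V E u c =
     (\<Sum>S\<in>pinned_configs V u c. real (card S) * gibbs_weight b g l V E S)
     / (\<Sum>S\<in>pinned_configs V u c. gibbs_weight b g l V E S)"

lemma finite_pinned_configs: "finite V \<Longrightarrow> finite (pinned_configs V u c)"
  unfolding pinned_configs_def by (rule finite_subset[of _ "Pow V"]) auto

lemma simple_graph_finite_edges: "simple_graph V E \<Longrightarrow> finite E"
  unfolding simple_graph_def by (metis PowI finite_Pow_iff finite_subset subsetI)

lemma simple_graph_UN:
  assumes "finite I" "\<And>i. i \<in> I \<Longrightarrow> simple_graph (Vs i) (Es i)"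
  shows "simple_graph (insert u (\<Union>i\<in>I. Vs i)) (\<Union>i\<in>I. Es i)"
  using assms unfolding simple_graph_def by blast

lemma simple_graph_no_loop_edge:
  assumes "simple_graph V E" "e \<in> E"
  shows "\<not> e \<subseteq> {u}"
  using assms card_mono[of "{u}" e] unfolding simple_graph_def by fastforce

lemma simple_graph_no_edge_within:
  assumes "simple_graph V E" "X \<subseteq> {u}"
  shows "{e \<in> E. e \<subseteq> X} = {}"
proof -
  have "\<not> e \<subseteq> X" if "e \<in> E" for e
    using simple_graph_no_loop_edge[OF assms(1) that, of u] assms(2) by auto
  then show ?thesis
    by auto
qed

lemma simple_graph_edges_disjoint:
  assumes "simple_graph V1 E1" "simple_graph V2 E2" "V1 \<inter> V2 = {u}"
  shows "E1 \<inter> E2 = {}"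
proof (rule ccontr)
  assume "E1 \<inter> E2 \<noteq> {}"
  then obtain e where "e \<in> E1" "e \<in> E2"
    by blast
  then have "e \<subseteq> V1 \<inter> V2"
    using assms(1,2) unfolding simple_graph_def by auto
  then show False
    using simple_graph_no_loop_edge[OF assms(1) \<open>e \<in> E1\<close>] assms(3) by simp
qed

section \<open>Gluing two graphs at a common vertex\<close>

lemma sum_configs_glue:
  fixes f :: "'a set \<Rightarrow> real"
  assumes "finite V1" "finite V2" and inter: "V1 \<inter> V2 = {u}"
  shows "(\<Sum>S | S \<subseteq> V1 \<union> V2 \<and> P (S \<inter> V1). f S)
       = (\<Sum>S1 | S1 \<subseteq> V1 \<and> P S1. \<Sum>S2\<in>pinned_configs V2 u (u \<in> S1). f (S1 \<union> S2))"
proof -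
  let ?A = "{S1. S1 \<subseteq> V1 \<and> P S1}" and ?B = "\<lambda>S1. pinned_configs V2 u (u \<in> S1)"
  have split: "(S1 \<union> S2) \<inter> V1 = S1" "(S1 \<union> S2) \<inter> V2 = S2"
    if "S1 \<subseteq> V1" "S2 \<subseteq> V2" "u \<in> S2 \<longleftrightarrow> u \<in> S1" for S1 S2
    using that inter by auto
  have "(\<Sum>S1\<in>?A. \<Sum>S2\<in>?B S1. f (S1 \<union> S2)) = (\<Sum>(S1, S2)\<in>Sigma ?A ?B. f (S1 \<union> S2))"
    using assms by (intro sum.Sigma) (auto intro: finite_pinned_configs)
  also have "\<dots> = (\<Sum>S | S \<subseteq> V1 \<union> V2 \<and> P (S \<inter> V1). f S)"
    by (rule sum.reindex_bij_witness[of _ "\<lambda>S. (S \<inter> V1, S \<inter> V2)" "\<lambda>(S1, S2). S1 \<union> S2"])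
       (use inter in \<open>auto simp: pinned_configs_def split\<close>)
  finally show ?thesis ..
qed

lemma card_Un_glue:
  assumes "finite V1" "finite V2" "V1 \<inter> V2 = {u}" "S1 \<subseteq> V1" "S2 \<subseteq> V2" "u \<in> S1 \<longleftrightarrow> u \<in> S2"
  shows "card (S1 \<union> S2) + (if u \<in> S1 then 1 else 0) = card S1 + card S2"
proof -
  have "finite S1" "finite S2"
    using assms(1,2,4,5) finite_subset by auto
  then have "card (S1 \<union> S2) + card (S1 \<inter> S2) = card S1 + card S2"
    using card_Un_Int[of S1 S2] by simp
  moreover have "S1 \<inter> S2 = (if u \<in> S1 then {u} else {})"
    using assms(3-6) by auto
  ultimately show ?thesis
    by (cases "u \<in> S1") simp_all
qed

lemma card_edges_glue:
  assumes G1: "simple_graph V1 E1" and G2: "simple_graph V2 E2" and "V1 \<inter> V2 = {u}"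
    and "\<And>e. e \<in> E1 \<Longrightarrow> e \<subseteq> X \<longleftrightarrow> e \<subseteq> X1" and "\<And>e. e \<in> E2 \<Longrightarrow> e \<subseteq> X \<longleftrightarrow> e \<subseteq> X2"
  shows "card {e \<in> E1 \<union> E2. e \<subseteq> X} = card {e \<in> E1. e \<subseteq> X1} + card {e \<in> E2. e \<subseteq> X2}"
proof -
  have "{e \<in> E1 \<union> E2. e \<subseteq> X} = {e \<in> E1. e \<subseteq> X1} \<union> {e \<in> E2. e \<subseteq> X2}"
    using assms(4,5) by auto
  then show ?thesis
    using simple_graph_edges_disjoint[OF assms(1-3)]
      simple_graph_finite_edges[OF G1] simple_graph_finite_edges[OF G2]
    by (simp add: card_Un_disjoint disjoint_iff)
qed

lemma edge_within_glue:
  assumes "simple_graph V1 E1" "V1 \<inter> V2 = {u}" "e \<in> E1" "S2 \<subseteq> V2" "u \<in> S1 \<longleftrightarrow> u \<in> S2"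
  shows "e \<subseteq> S1 \<union> S2 \<longleftrightarrow> e \<subseteq> S1" "e \<subseteq> (V1 \<union> V2) - (S1 \<union> S2) \<longleftrightarrow> e \<subseteq> V1 - S1"
proof -
  have "e \<subseteq> V1"
    using assms(1,3) unfolding simple_graph_def by blast
  moreover have "e \<inter> V2 \<subseteq> {u}"
    using \<open>e \<subseteq> V1\<close> assms(2) by blast
  ultimately show "e \<subseteq> S1 \<union> S2 \<longleftrightarrow> e \<subseteq> S1" "e \<subseteq> (V1 \<union> V2) - (S1 \<union> S2) \<longleftrightarrow> e \<subseteq> V1 - S1"
    using assms(4,5) by auto
qed

lemma gibbs_weight_glue:
  assumes G1: "simple_graph V1 E1" and G2: "simple_graph V2 E2" and inter: "V1 \<inter> V2 = {u}"
    and S1: "S1 \<subseteq> V1" and S2: "S2 \<subseteq> V2" and agree: "u \<in> S1 \<longleftrightarrow> u \<in> S2"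
  shows "gibbs_weight b g l (V1 \<union> V2) (E1 \<union> E2) (S1 \<union> S2) * (if u \<in> S1 then l else 1)
       = gibbs_weight b g l V1 E1 S1 * gibbs_weight b g l V2 E2 S2"
proof -
  have "finite V1" "finite V2"
    using G1 G2 unfolding simple_graph_def by auto
  from card_Un_glue[OF this inter S1 S2 agree]
  have vertices: "l ^ card (S1 \<union> S2) * (if u \<in> S1 then l else 1) = l ^ card S1 * l ^ card S2"
    by (cases "u \<in> S1") (simp_all flip: power_add power_Suc2)
  have edges1: "e \<subseteq> S1 \<union> S2 \<longleftrightarrow> e \<subseteq> S1" "e \<subseteq> (V1 \<union> V2) - (S1 \<union> S2) \<longleftrightarrow> e \<subseteq> V1 - S1"
    if "e \<in> E1" for e
    using edge_within_glue[OF G1 inter that S2 agree] .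
  have edges2: "e \<subseteq> S1 \<union> S2 \<longleftrightarrow> e \<subseteq> S2" "e \<subseteq> (V1 \<union> V2) - (S1 \<union> S2) \<longleftrightarrow> e \<subseteq> V2 - S2"
    if "e \<in> E2" for e
    using edge_within_glue[OF G2 _ that S1 agree[symmetric]] inter by (auto simp: Un_commute)
  have edges:
    "card {e \<in> E1 \<union> E2. e \<subseteq> S1 \<union> S2} = card {e \<in> E1. e \<subseteq> S1} + card {e \<in> E2. e \<subseteq> S2}"
    "card {e \<in> E1 \<union> E2. e \<subseteq> (V1 \<union> V2) - (S1 \<union> S2)}
       = card {e \<in> E1. e \<subseteq> V1 - S1} + card {e \<in> E2. e \<subseteq> V2 - S2}"
    using card_edges_glue[OF G1 G2 inter edges1(1) edges2(1)]
      card_edges_glue[OF G1 G2 inter edges1(2) edges2(2)] by simp_all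
  have "gibbs_weight b g l (V1 \<union> V2) (E1 \<union> E2) (S1 \<union> S2) * (if u \<in> S1 then l else 1)
      = (l ^ card (S1 \<union> S2) * (if u \<in> S1 then l else 1))
        * (b ^ card {e \<in> E1. e \<subseteq> V1 - S1} * b ^ card {e \<in> E2. e \<subseteq> V2 - S2})
        * (g ^ card {e \<in> E1. e \<subseteq> S1} * g ^ card {e \<in> E2. e \<subseteq> S2})"
    unfolding gibbs_weight_def edges power_add by (simp only: mult_ac)
  also have "\<dots> = gibbs_weight b g l V1 E1 S1 * gibbs_weight b g l V2 E2 S2"
    unfolding vertices gibbs_weight_def by (simp only: mult_ac)
  finally show ?thesis .
qed

lemma sum_gibbs_weight_fiber:
  fixes b g l :: real
  assumes G1: "simple_graph V1 E1" and G2: "simple_graph V2 E2" and inter: "V1 \<inter> V2 = {u}"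
    and S1: "S1 \<subseteq> V1" and l: "l \<noteq> 0"
  shows "(\<Sum>S2\<in>pinned_configs V2 u (u \<in> S1). gibbs_weight b g l (V1 \<union> V2) (E1 \<union> E2) (S1 \<union> S2))
       = gibbs_weight b g l V1 E1 S1 * pinned_partition_fn b g l V2 E2 u (u \<in> S1)"
proof -
  have "gibbs_weight b g l (V1 \<union> V2) (E1 \<union> E2) (S1 \<union> S2)
      = gibbs_weight b g l V1 E1 S1 * gibbs_weight b g l V2 E2 S2 / (if u \<in> S1 then l else 1)"
    if "S2 \<in> pinned_configs V2 u (u \<in> S1)" for S2
    using gibbs_weight_glue[OF G1 G2 inter S1, of S2] that l
    unfolding pinned_configs_def by (simp add: eq_divide_eq)
  then show ?thesis
    unfolding pinned_partition_fn_def by (simp add: sum_distrib_left sum_divide_distrib)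
qed

lemma sum_size_weight_fiber:
  fixes b g l :: real
  assumes G1: "simple_graph V1 E1" and G2: "simple_graph V2 E2" and inter: "V1 \<inter> V2 = {u}"
    and S1: "S1 \<subseteq> V1" and l: "l \<noteq> 0"
    and nonzero: "pinned_partition_fn b g l V2 E2 u (u \<in> S1) \<noteq> 0"
  shows "(\<Sum>S2\<in>pinned_configs V2 u (u \<in> S1).
          real (card (S1 \<union> S2)) * gibbs_weight b g l (V1 \<union> V2) (E1 \<union> E2) (S1 \<union> S2))
       = gibbs_weight b g l V1 E1 S1 * pinned_partition_fn b g l V2 E2 u (u \<in> S1)
         * (real (card S1) - (if u \<in> S1 then 1 else 0) + pinned_mean_size b g l V2 E2 u (u \<in> S1))"
proof -
  let ?C = "pinned_configs V2 u (u \<in> S1)" and ?w = "gibbs_weight b g l V2 E2"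
  let ?k = "gibbs_weight b g l V1 E1 S1 / (if u \<in> S1 then l else 1)"
    and ?a = "real (card S1) - (if u \<in> S1 then 1 else 0)"
  have "finite V1" "finite V2"
    using G1 G2 unfolding simple_graph_def by auto
  have "real (card (S1 \<union> S2)) * gibbs_weight b g l (V1 \<union> V2) (E1 \<union> E2) (S1 \<union> S2)
      = ?k * (?a * ?w S2 + real (card S2) * ?w S2)"
    if "S2 \<in> ?C" for S2
  proof -
    have S2: "S2 \<subseteq> V2" "u \<in> S1 \<longleftrightarrow> u \<in> S2"
      using that unfolding pinned_configs_def by auto
    from card_Un_glue[OF \<open>finite V1\<close> \<open>finite V2\<close> inter S1 S2]
    have card: "real (card (S1 \<union> S2)) = ?a + real (card S2)"
      by (cases "u \<in> S1") (simp_all flip: of_nat_add)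
    have weight: "gibbs_weight b g l (V1 \<union> V2) (E1 \<union> E2) (S1 \<union> S2)
        = gibbs_weight b g l V1 E1 S1 * ?w S2 / (if u \<in> S1 then l else 1)"
      using gibbs_weight_glue[OF G1 G2 inter S1 S2, of b g l] l by (simp add: eq_divide_eq)
    show ?thesis
      unfolding card weight using l by (simp add: field_simps)
  qed
  then have "(\<Sum>S2\<in>?C. real (card (S1 \<union> S2)) * gibbs_weight b g l (V1 \<union> V2) (E1 \<union> E2) (S1 \<union> S2))
      = ?k * (?a * (\<Sum>S2\<in>?C. ?w S2) + (\<Sum>S2\<in>?C. real (card S2) * ?w S2))"
    by (simp add: sum.distrib sum_distrib_left ring_distribs mult.assoc)
  also have "\<dots> = gibbs_weight b g l V1 E1 S1 * pinned_partition_fn b g l V2 E2 u (u \<in> S1)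
      * (?a + pinned_mean_size b g l V2 E2 u (u \<in> S1))"
    using nonzero l unfolding pinned_partition_fn_def pinned_mean_size_def by (simp add: field_simps)
  finally show ?thesis .
qed

lemma sum_gibbs_weight_glue:
  fixes b g l :: real
  assumes G1: "simple_graph V1 E1" and G2: "simple_graph V2 E2" and inter: "V1 \<inter> V2 = {u}"
    and l: "l \<noteq> 0"
  shows "(\<Sum>S | S \<subseteq> V1 \<union> V2 \<and> P (S \<inter> V1). gibbs_weight b g l (V1 \<union> V2) (E1 \<union> E2) S)
       = (\<Sum>S1 | S1 \<subseteq> V1 \<and> P S1.
            gibbs_weight b g l V1 E1 S1 * pinned_partition_fn b g l V2 E2 u (u \<in> S1))"
proof -
  have "finite V1" "finite V2"
    using G1 G2 unfolding simple_graph_def by auto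
  then show ?thesis
    unfolding sum_configs_glue[OF \<open>finite V1\<close> \<open>finite V2\<close> inter]
    by (intro sum.cong refl) (simp add: sum_gibbs_weight_fiber[OF G1 G2 inter _ l])
qed

lemma sum_size_weight_glue:
  fixes b g l :: real
  assumes G1: "simple_graph V1 E1" and G2: "simple_graph V2 E2" and inter: "V1 \<inter> V2 = {u}"
    and l: "l \<noteq> 0"
    and nonzero: "\<And>S1. S1 \<subseteq> V1 \<Longrightarrow> P S1 \<Longrightarrow> pinned_partition_fn b g l V2 E2 u (u \<in> S1) \<noteq> 0"
  shows "(\<Sum>S | S \<subseteq> V1 \<union> V2 \<and> P (S \<inter> V1).
            real (card S) * gibbs_weight b g l (V1 \<union> V2) (E1 \<union> E2) S)
       = (\<Sum>S1 | S1 \<subseteq> V1 \<and> P S1.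
            gibbs_weight b g l V1 E1 S1 * pinned_partition_fn b g l V2 E2 u (u \<in> S1)
            * (real (card S1) - (if u \<in> S1 then 1 else 0) + pinned_mean_size b g l V2 E2 u (u \<in> S1)))"
proof -
  have "finite V1" "finite V2"
    using G1 G2 unfolding simple_graph_def by auto
  then show ?thesis
    unfolding sum_configs_glue[OF \<open>finite V1\<close> \<open>finite V2\<close> inter]
    by (intro sum.cong refl) (simp add: sum_size_weight_fiber[OF G1 G2 inter _ l] nonzero)
qed

lemma pinned_configs_Un:
  "u \<in> V1 \<Longrightarrow> pinned_configs (V1 \<union> V2) u c = {S. S \<subseteq> V1 \<union> V2 \<and> (u \<in> S \<inter> V1 \<longleftrightarrow> c)}"
  unfolding pinned_configs_def by auto

lemma pinned_partition_fn_glue: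
  fixes b g l :: real
  assumes G1: "simple_graph V1 E1" and G2: "simple_graph V2 E2" and inter: "V1 \<inter> V2 = {u}"
    and l: "l \<noteq> 0"
  shows "pinned_partition_fn b g l (V1 \<union> V2) (E1 \<union> E2) u c
       = pinned_partition_fn b g l V1 E1 u c * pinned_partition_fn b g l V2 E2 u c"
proof -
  have "u \<in> V1"
    using inter by blast
  have "(\<Sum>S\<in>pinned_configs (V1 \<union> V2) u c. gibbs_weight b g l (V1 \<union> V2) (E1 \<union> E2) S)
      = (\<Sum>S1\<in>pinned_configs V1 u c. gibbs_weight b g l V1 E1 S1 * pinned_partition_fn b g l V2 E2 u c)"
    unfolding pinned_configs_Un[OF \<open>u \<in> V1\<close>] sum_gibbs_weight_glue[OF G1 G2 inter l, where P = "\<lambda>S1. u \<in> S1 \<longleftrightarrow> c"]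
    by (rule sum.cong) (auto simp: pinned_configs_def)
  then show ?thesis
    unfolding pinned_partition_fn_def[of _ _ _ "V1 \<union> V2"] pinned_partition_fn_def[of _ _ _ V1]
    by (simp add: sum_distrib_right)
qed

lemma pinned_mean_size_glue:
  fixes b g l :: real
  assumes G1: "simple_graph V1 E1" and G2: "simple_graph V2 E2" and inter: "V1 \<inter> V2 = {u}"
    and l: "l \<noteq> 0"
    and nonzero: "pinned_partition_fn b g l V1 E1 u c \<noteq> 0" "pinned_partition_fn b g l V2 E2 u c \<noteq> 0"
  shows "pinned_mean_size b g l (V1 \<union> V2) (E1 \<union> E2) u c
       = pinned_mean_size b g l V1 E1 u c + pinned_mean_size b g l V2 E2 u c - (if c then 1 else 0)"
proof -
  let ?C = "pinned_configs V1 u c" and ?w = "gibbs_weight b g l V1 E1"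
  let ?Z2 = "pinned_partition_fn b g l V2 E2 u c" and ?m2 = "pinned_mean_size b g l V2 E2 u c"
  have "u \<in> V1"
    using inter by blast
  have Z1: "(\<Sum>S1\<in>?C. ?w S1) \<noteq> 0"
    using nonzero(1) unfolding pinned_partition_fn_def by simp
  have "(\<Sum>S\<in>pinned_configs (V1 \<union> V2) u c. real (card S) * gibbs_weight b g l (V1 \<union> V2) (E1 \<union> E2) S)
      = (\<Sum>S1\<in>?C. ?w S1 * ?Z2 * (real (card S1) - (if c then 1 else 0) + ?m2))"
    unfolding pinned_configs_Un[OF \<open>u \<in> V1\<close>]
    using sum_size_weight_glue[OF G1 G2 inter l, where P = "\<lambda>S1. u \<in> S1 \<longleftrightarrow> c"] nonzero(2)
    by (auto simp: pinned_configs_def intro: sum.cong)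
  also have "\<dots> = ?Z2 * ((\<Sum>S1\<in>?C. real (card S1) * ?w S1) + (?m2 - (if c then 1 else 0)) * (\<Sum>S1\<in>?C. ?w S1))"
    by (simp add: sum_distrib_left sum_distrib_right sum.distrib sum_subtractf algebra_simps)
  finally have sizes: "(\<Sum>S\<in>pinned_configs (V1 \<union> V2) u c.
      real (card S) * gibbs_weight b g l (V1 \<union> V2) (E1 \<union> E2) S) = \<dots>" .
  have weights: "(\<Sum>S\<in>pinned_configs (V1 \<union> V2) u c. gibbs_weight b g l (V1 \<union> V2) (E1 \<union> E2) S)
      = ?Z2 * (\<Sum>S1\<in>?C. ?w S1)"
    using pinned_partition_fn_glue[OF G1 G2 inter l, of b g c] l unfolding pinned_partition_fn_def
    by (simp add: field_simps split: if_splits)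
  show ?thesis
    unfolding pinned_mean_size_def[of _ _ _ "V1 \<union> V2"] sizes weights
    using Z1 nonzero(2) by (simp add: pinned_mean_size_def field_simps)
qed

lemma pinned_partition_fn_singleton: "l \<noteq> 0 \<Longrightarrow> pinned_partition_fn b g l {u} {} u c = 1"
  and pinned_mean_size_singleton: "l \<noteq> 0 \<Longrightarrow> pinned_mean_size b g l {u} {} u c = (if c then 1 else 0)"
proof -
  have "pinned_configs {u} u c = {if c then {u} else {}}"
    unfolding pinned_configs_def by (cases c) auto
  then show "l \<noteq> 0 \<Longrightarrow> pinned_partition_fn b g l {u} {} u c = 1"
    "l \<noteq> 0 \<Longrightarrow> pinned_mean_size b g l {u} {} u c = (if c then 1 else 0)"
    unfolding pinned_partition_fn_def pinned_mean_size_def gibbs_weight_def by simp_all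
qed

lemma pinned_branches_glue:
  fixes Vs :: "nat \<Rightarrow> 'a set" and Es :: "nat \<Rightarrow> 'a set set" and b g l :: real
  assumes l: "l \<noteq> 0"
    and "\<And>i. i < k \<Longrightarrow> simple_graph (Vs i) (Es i)" and "\<And>i. i < k \<Longrightarrow> u \<in> Vs i"
    and "\<And>i j. i < k \<Longrightarrow> j < k \<Longrightarrow> i \<noteq> j \<Longrightarrow> Vs i \<inter> Vs j = {u}"
    and "\<And>i. i < k \<Longrightarrow> pinned_partition_fn b g l (Vs i) (Es i) u c \<noteq> 0"
  shows "pinned_partition_fn b g l (insert u (\<Union>i<k. Vs i)) (\<Union>i<k. Es i) u c
           = (\<Prod>i<k. pinned_partition_fn b g l (Vs i) (Es i) u c)
         \<and> pinned_mean_size b g l (insert u (\<Union>i<k. Vs i)) (\<Union>i<k. Es i) u c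
           = (if c then 1 else 0) + (\<Sum>i<k. pinned_mean_size b g l (Vs i) (Es i) u c - (if c then 1 else 0))"
  using assms(2-)
proof (induction k)
  case 0
  then show ?case
    by (simp add: pinned_partition_fn_singleton[OF l] pinned_mean_size_singleton[OF l])
next
  case (Suc k)
  let ?V = "insert u (\<Union>i<k. Vs i)" and ?E = "\<Union>i<k. Es i"
  have IH: "pinned_partition_fn b g l ?V ?E u c = (\<Prod>i<k. pinned_partition_fn b g l (Vs i) (Es i) u c)"
    "pinned_mean_size b g l ?V ?E u c
       = (if c then 1 else 0) + (\<Sum>i<k. pinned_mean_size b g l (Vs i) (Es i) u c - (if c then 1 else 0))"
    using Suc by simp_all
  have G: "simple_graph ?V ?E" "simple_graph (Vs k) (Es k)"
    using Suc.prems(1) by (auto intro: simple_graph_UN)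
  have "Vs i \<inter> Vs k = {u}" if "i < k" for i
    using Suc.prems(3) that by simp
  then have inter: "?V \<inter> Vs k = {u}"
    using Suc.prems(2) by auto
  have nonzero: "pinned_partition_fn b g l ?V ?E u c \<noteq> 0" "pinned_partition_fn b g l (Vs k) (Es k) u c \<noteq> 0"
    using Suc.prems(4) unfolding IH(1) by simp_all
  have union: "insert u (\<Union>i<Suc k. Vs i) = ?V \<union> Vs k" "(\<Union>i<Suc k. Es i) = ?E \<union> Es k"
    by (auto simp: lessThan_Suc)
  show ?case
    unfolding union pinned_partition_fn_glue[OF G inter l] pinned_mean_size_glue[OF G inter l nonzero] IH
    by simp
qed

lemma gibbs_weight_edge:
  assumes "r \<noteq> u"
  shows "gibbs_weight b g l {r, u} {{r, u}} {} = b" "gibbs_weight b g l {r, u} {{r, u}} {r} = l"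
    "gibbs_weight b g l {r, u} {{r, u}} {u} = l" "gibbs_weight b g l {r, u} {{r, u}} {r, u} = l^2 * g"
  using assms unfolding gibbs_weight_def by (simp_all add: Collect_conv_if insert_Diff_if power2_eq_square)

lemma sum_edge_configs:
  fixes f :: "'a set \<Rightarrow> real"
  assumes "r \<noteq> u"
  shows "(\<Sum>S | S \<subseteq> {r, u} \<and> r \<in> S. f S) = f {r} + f {r, u}"
    and "(\<Sum>S | S \<subseteq> {r, u} \<and> r \<notin> S. f S) = f {} + f {u}"
proof -
  have "{S. S \<subseteq> {r, u} \<and> r \<in> S} = {{r}, {r, u}}" "{S. S \<subseteq> {r, u} \<and> r \<notin> S} = {{}, {u}}"
    using assms by auto
  then show "(\<Sum>S | S \<subseteq> {r, u} \<and> r \<in> S. f S) = f {r} + f {r, u}"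
    "(\<Sum>S | S \<subseteq> {r, u} \<and> r \<notin> S. f S) = f {} + f {u}"
    using assms by simp_all
qed

lemma pinned_pendant_edge:
  fixes b g l :: real
  assumes G: "simple_graph V2 E2" and u: "u \<in> V2" and r: "r \<notin> V2" "r \<noteq> u" and l: "l \<noteq> 0"
    and nonzero: "pinned_partition_fn b g l V2 E2 u True \<noteq> 0" "pinned_partition_fn b g l V2 E2 u False \<noteq> 0"
  defines "V \<equiv> {r, u} \<union> V2" and "E \<equiv> {{r, u}} \<union> E2"
    and "h \<equiv> pinned_partition_fn b g l V2 E2 u" and "m \<equiv> pinned_mean_size b g l V2 E2 u"
  shows "pinned_partition_fn b g l V E r True = l * g * h True + h False"
    and "pinned_partition_fn b g l V E r False = l * h True + b * h False"
    and "pinned_mean_size b g l V E r True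
         = (l * g * h True * (1 + m True) + h False * (1 + m False)) / (l * g * h True + h False)"
    and "pinned_mean_size b g l V E r False
         = (l * h True * m True + b * h False * m False) / (l * h True + b * h False)"
proof -
  let ?w = "gibbs_weight b g l {r, u} {{r, u}}"
  have G1: "simple_graph {r, u} {{r, u}}"
    using r(2) unfolding simple_graph_def by simp
  have inter: "{r, u} \<inter> V2 = {u}"
    using u r by auto
  have configs: "pinned_configs ({r, u} \<union> V2) r c
      = {S. S \<subseteq> {r, u} \<union> V2 \<and> (r \<in> S \<inter> {r, u} \<longleftrightarrow> c)}" for c
    by (rule pinned_configs_Un) simp
  have weights: "(\<Sum>S\<in>pinned_configs V r c. gibbs_weight b g l V E S)
      = (\<Sum>S1 | S1 \<subseteq> {r, u} \<and> (r \<in> S1 \<longleftrightarrow> c). ?w S1 * h (u \<in> S1))" for c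
    unfolding V_def E_def configs h_def
    by (rule sum_gibbs_weight_glue[OF G1 G inter l, where P = "\<lambda>S1. r \<in> S1 \<longleftrightarrow> c"])
  have "pinned_partition_fn b g l V2 E2 u (u \<in> S1) \<noteq> 0" for S1
    using nonzero by (cases "u \<in> S1") simp_all
  then have sizes: "(\<Sum>S\<in>pinned_configs V r c. real (card S) * gibbs_weight b g l V E S)
      = (\<Sum>S1 | S1 \<subseteq> {r, u} \<and> (r \<in> S1 \<longleftrightarrow> c).
           ?w S1 * h (u \<in> S1) * (real (card S1) - (if u \<in> S1 then 1 else 0) + m (u \<in> S1)))" for c
    unfolding V_def E_def configs h_def m_def
    by (rule sum_size_weight_glue[OF G1 G inter l, where P = "\<lambda>S1. r \<in> S1 \<longleftrightarrow> c"])
  note edge = sum_edge_configs[OF r(2)] gibbs_weight_edge[OF r(2)]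
  show "pinned_partition_fn b g l V E r True = l * g * h True + h False"
    "pinned_partition_fn b g l V E r False = l * h True + b * h False"
    unfolding pinned_partition_fn_def[of _ _ _ V] weights
    using r(2) l by (simp_all add: edge power2_eq_square field_simps)
  have cancel: "(l * x) / (l * y) = x / y" for x y
    using l by simp
  show "pinned_mean_size b g l V E r True
         = (l * g * h True * (1 + m True) + h False * (1 + m False)) / (l * g * h True + h False)"
    unfolding pinned_mean_size_def[of _ _ _ V] sizes weights
    using r(2) cancel[of "l * g * h True * (1 + m True) + h False * (1 + m False)" "l * g * h True + h False"]
    by (simp add: edge power2_eq_square algebra_simps)
  show "pinned_mean_size b g l V E r False
         = (l * h True * m True + b * h False * m False) / (l * h True + b * h False)"
    unfolding pinned_mean_size_def[of _ _ _ V] sizes weights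
    using r(2) by (simp add: edge algebra_simps)
qed

section \<open>Positivity\<close>

lemma gibbs_weight_nonneg: "b \<ge> 0 \<Longrightarrow> g \<ge> 0 \<Longrightarrow> l \<ge> 0 \<Longrightarrow> gibbs_weight b g l V E S \<ge> 0"
  unfolding gibbs_weight_def by simp

lemma pinned_partition_fn_pos:
  assumes G: "simple_graph V E" and "u \<in> V" and af: "antiferro b g" and l: "l > 0"
  shows "pinned_partition_fn b g l V E u c > 0"
proof -
  have b: "b \<ge> 0" and g: "g \<ge> 0" and nz: "b \<noteq> 0 \<or> g \<noteq> 0"
    using af unfolding antiferro_def by auto
  txt \<open>A configuration of positive weight: a vanishing \<open>\<beta>\<close> (resp. \<open>\<gamma>\<close>) is avoided by leaving
    at most one vertex with spin 0 (resp. 1).\<close>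
  define S0 where "S0 = (if c then (if g = 0 then {u} else V) else (if b = 0 then V - {u} else {}))"
  have S0: "S0 \<in> pinned_configs V u c"
    using \<open>u \<in> V\<close> unfolding S0_def pinned_configs_def by auto
  have "b = 0 \<Longrightarrow> V - S0 \<subseteq> {u}" "g = 0 \<Longrightarrow> S0 \<subseteq> {u}"
    using nz unfolding S0_def by auto
  then have no_edges: "b = 0 \<Longrightarrow> {e \<in> E. e \<subseteq> V - S0} = {}" "g = 0 \<Longrightarrow> {e \<in> E. e \<subseteq> S0} = {}"
    using simple_graph_no_edge_within[OF G] by simp_all
  have "b ^ card {e \<in> E. e \<subseteq> V - S0} > 0"
    using b by (cases "b = 0") (simp_all add: no_edges(1))
  moreover have "g ^ card {e \<in> E. e \<subseteq> S0} > 0"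
    using g by (cases "g = 0") (simp_all add: no_edges(2))
  ultimately have "gibbs_weight b g l V E S0 > 0"
    unfolding gibbs_weight_def using l by simp
  also have "\<dots> \<le> (\<Sum>S\<in>pinned_configs V u c. gibbs_weight b g l V E S)"
    using G b g l unfolding simple_graph_def
    by (intro member_le_sum[OF S0] gibbs_weight_nonneg finite_pinned_configs) simp_all
  finally show ?thesis
    unfolding pinned_partition_fn_def using l by simp
qed

lemma partition_fn_pos:
  assumes G: "simple_graph V E" and "r \<in> V" and af: "antiferro b g" and l: "l > 0"
  shows "partition_fn b g l V E > 0"
proof -
  have "0 < pinned_partition_fn b g l V E r True * l"
    using pinned_partition_fn_pos[OF assms] l by simp
  also have "\<dots> = (\<Sum>S\<in>pinned_configs V r True. gibbs_weight b g l V E S)"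
    using l unfolding pinned_partition_fn_def by simp
  also have "\<dots> \<le> partition_fn b g l V E"
    unfolding partition_fn_def configs_def using G af l
    by (intro sum_mono2 gibbs_weight_nonneg) (auto simp: simple_graph_def antiferro_def pinned_configs_def)
  finally show ?thesis .
qed

section \<open>Algebra of the pendant-edge recursion\<close>

lemma omega_fraction:
  fixes b g x :: real
  assumes "b \<ge> 0" "g \<ge> 0" "b * g < 1" "x > 0"
  shows "omega b g ((1 + g * x) / (b + x)) = x * (1 - b * g) / ((b + x) * (1 + g * x))"
proof -
  have pos: "b + x > 0" "1 + g * x > 0" "1 - b * g > 0"
    using assms by (simp_all add: add_nonneg_pos add_pos_nonneg)
  have "1 + b * g - b * ((1 + g * x) / (b + x)) - g / ((1 + g * x) / (b + x))
      = x * (1 - b * g)^2 / ((b + x) * (1 + g * x))"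
    using pos by (simp add: field_simps power2_eq_square)
  then show ?thesis
    unfolding omega_def using pos by (simp add: power2_eq_square)
qed

lemma fraction_mean_gap_identity:
  fixes b g x m_down m_up :: real
  assumes "b + x \<noteq> 0" "1 + g * x \<noteq> 0"
  shows "(g * x * (1 + m_up) + (1 + m_down)) / (1 + g * x) - (x * m_up + b * m_down) / (b + x)
       = 1 - x * (1 - b * g) / ((b + x) * (1 + g * x)) * (m_up - m_down)"
proof -
  have "(b + x) * (1 + g * x) \<noteq> 0"
    using assms by simp
  then show ?thesis
    using assms by (simp add: field_simps)
qed

lemma fraction_bounds:
  fixes b g x :: real
  assumes af: "antiferro b g" and x: "x > 0" and R_def: "R = (1 + g * x) / (b + x)"
  shows "g < R" "b \<noteq> 0 \<Longrightarrow> R < 1 / b" "0 < omega b g R" "omega b g R < 1"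
proof -
  have b: "b \<ge> 0" and g: "g \<ge> 0" and bg: "b * g < 1" and nz: "b \<noteq> 0 \<or> g \<noteq> 0"
    using af unfolding antiferro_def by auto
  have pos: "b + x > 0" "1 + g * x > 0"
    using b g x by (simp_all add: add_nonneg_pos add_pos_nonneg)
  have "R - g = (1 - b * g) / (b + x)"
    unfolding R_def using pos by (simp add: field_simps)
  moreover have "(1 - b * g) / (b + x) > 0"
    using bg pos by simp
  ultimately show "g < R"
    by linarith
  have "1 - b * R = x * (1 - b * g) / (b + x)"
    unfolding R_def using pos by (simp add: field_simps)
  moreover have "x * (1 - b * g) / (b + x) > 0"
    using bg pos x by simp
  ultimately have "R * b < 1"
    by (simp add: mult.commute)
  then show "R < 1 / b" if "b \<noteq> 0"
    using that b by (simp add: pos_less_divide_eq)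
  have omega: "omega b g R = x * (1 - b * g) / ((b + x) * (1 + g * x))"
    unfolding R_def using omega_fraction[OF b g bg x] .
  then show "0 < omega b g R"
    using bg pos x by simp
  have "(b + x) * (1 + g * x) - x * (1 - b * g) = b + 2 * b * g * x + g * x^2"
    by (simp add: algebra_simps power2_eq_square)
  also have "\<dots> > 0"
    using nz b g x by (auto simp: add_pos_nonneg add_nonneg_pos)
  finally show "omega b g R < 1"
    unfolding omega using pos by simp
qed

lemma pendant_edge_algebra:
  fixes b g l h0 h1 m_down m_up :: real
  assumes b: "b \<ge> 0" and g: "g \<ge> 0" and bg: "b * g < 1" and l: "l > 0" and h: "h0 > 0" "h1 > 0"
  defines "x \<equiv> l * (h1 / h0)"
  shows "(l * g * h1 + h0) / (l * h1 + b * h0) = (1 + g * x) / (b + x)"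
    and "(l * g * h1 * (1 + m_up) + h0 * (1 + m_down)) / (l * g * h1 + h0)
           - (l * h1 * m_up + b * h0 * m_down) / (l * h1 + b * h0)
         = 1 - omega b g ((1 + g * x) / (b + x)) * (m_up - m_down)"
proof -
  have x: "x > 0"
    using l h unfolding x_def by simp
  have scaled: "h0 * (1 + g * x) = l * g * h1 + h0" "h0 * (b + x) = l * h1 + b * h0"
    "h0 * (g * x * (1 + m_up) + (1 + m_down)) = l * g * h1 * (1 + m_up) + h0 * (1 + m_down)"
    "h0 * (x * m_up + b * m_down) = l * h1 * m_up + b * h0 * m_down"
    using h unfolding x_def by (simp_all add: field_simps)
  have cancel: "(h0 * p) / (h0 * q) = p / q" for p q
    using h by simp
  show "(l * g * h1 + h0) / (l * h1 + b * h0) = (1 + g * x) / (b + x)"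
    unfolding scaled(1,2)[symmetric] cancel ..
  have "b + x > 0" "1 + g * x > 0"
    using b g x by (simp_all add: add_nonneg_pos add_pos_nonneg)
  then show "(l * g * h1 * (1 + m_up) + h0 * (1 + m_down)) / (l * g * h1 + h0)
           - (l * h1 * m_up + b * h0 * m_down) / (l * h1 + b * h0)
         = 1 - omega b g ((1 + g * x) / (b + x)) * (m_up - m_down)"
    unfolding scaled[symmetric] cancel omega_fraction[OF b g bg x]
    by (intro fraction_mean_gap_identity) simp_all
qed

section \<open>Effective field and magnetization gap\<close>

lemma configs_Int_root:
  "configs V \<inter> {S. r \<in> S} = pinned_configs V r True"
  "configs V \<inter> {S. r \<notin> S} = pinned_configs V r False"
  unfolding configs_def pinned_configs_def by auto

lemma gibbs_prob_root:
  "gibbs_prob b g l V E {S. r \<in> S}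
     = (\<Sum>S\<in>pinned_configs V r True. gibbs_weight b g l V E S) / partition_fn b g l V E"
  "gibbs_prob b g l V E {S. r \<notin> S}
     = (\<Sum>S\<in>pinned_configs V r False. gibbs_weight b g l V E S) / partition_fn b g l V E"
  unfolding gibbs_prob_def gibbs_def configs_Int_root by (simp_all only: sum_divide_distrib)

lemma eff_field_eq_pinned_partition_fn:
  assumes "partition_fn b g l V E \<noteq> 0"
  shows "eff_field b g l V E r = pinned_partition_fn b g l V E r True / pinned_partition_fn b g l V E r False"
  using assms unfolding eff_field_def gibbs_prob_root pinned_partition_fn_def by simp

lemma mag_gap_eq_pinned_mean_size:
  assumes "partition_fn b g l V E \<noteq> 0"
  shows "mag_gap b g l V E r = pinned_mean_size b g l V E r True - pinned_mean_size b g l V E r False"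
proof -
  have "gibbs_cond_size b g l V E {S. r \<in> S} = pinned_mean_size b g l V E r True"
    "gibbs_cond_size b g l V E {S. r \<notin> S} = pinned_mean_size b g l V E r False"
    using assms unfolding gibbs_cond_size_def gibbs_prob_root gibbs_def pinned_mean_size_def configs_Int_root
    by (simp_all add: sum_divide_distrib[symmetric])
  then show ?thesis
    unfolding mag_gap_def by simp
qed

lemma eff_field_pos:
  assumes "simple_graph V E" "u \<in> V" "antiferro b g" "l > 0"
  shows "eff_field b g l V E u > 0"
  using eff_field_eq_pinned_partition_fn[OF partition_fn_pos[OF assms, THEN less_imp_neq, symmetric]]
    pinned_partition_fn_pos[OF assms] by simp

lemma eff_field_mag_gap_branches:
  fixes Vs :: "nat \<Rightarrow> 'a set" and Es :: "nat \<Rightarrow> 'a set set" and b g l :: real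
  assumes af: "antiferro b g" and l: "l > 0"
    and G: "\<And>i. i < k \<Longrightarrow> simple_graph (Vs i) (Es i)" and u: "\<And>i. i < k \<Longrightarrow> u \<in> Vs i"
    and disj: "\<And>i j. i < k \<Longrightarrow> j < k \<Longrightarrow> i \<noteq> j \<Longrightarrow> Vs i \<inter> Vs j = {u}"
  defines "VH \<equiv> insert u (\<Union>i<k. Vs i)" and "EH \<equiv> \<Union>i<k. Es i"
  shows "eff_field b g l VH EH u = (\<Prod>i<k. eff_field b g l (Vs i) (Es i) u)"
    and "mag_gap b g l VH EH u = 1 + (\<Sum>i<k. mag_gap b g l (Vs i) (Es i) u - 1)"
proof -
  have "l \<noteq> 0"
    using l by simp
  have nonzero: "pinned_partition_fn b g l (Vs i) (Es i) u c \<noteq> 0" if "i < k" for i c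
    using pinned_partition_fn_pos[OF G[OF that] u[OF that] af l, where c = c] by simp
  have branches: "pinned_partition_fn b g l VH EH u c = (\<Prod>i<k. pinned_partition_fn b g l (Vs i) (Es i) u c)"
    "pinned_mean_size b g l VH EH u c
       = (if c then 1 else 0) + (\<Sum>i<k. pinned_mean_size b g l (Vs i) (Es i) u c - (if c then 1 else 0))"
    for c
    using pinned_branches_glue[where Vs = Vs and Es = Es and k = k and u = u and c = c,
        OF \<open>l \<noteq> 0\<close> G u disj nonzero]
    unfolding VH_def EH_def by auto
  have "simple_graph VH EH"
    unfolding VH_def EH_def using G by (intro simple_graph_UN) auto
  then have Z: "partition_fn b g l VH EH \<noteq> 0"
    using partition_fn_pos[OF _ _ af l, of VH EH u] unfolding VH_def by simp
  have Zi: "partition_fn b g l (Vs i) (Es i) \<noteq> 0" if "i < k" for i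
    using partition_fn_pos[OF G[OF that] u[OF that] af l] by simp
  show "eff_field b g l VH EH u = (\<Prod>i<k. eff_field b g l (Vs i) (Es i) u)"
    unfolding eff_field_eq_pinned_partition_fn[OF Z] branches(1) prod_dividef[symmetric]
    by (rule prod.cong) (simp_all add: eff_field_eq_pinned_partition_fn[OF Zi])
  have "mag_gap b g l VH EH u
      = 1 + (\<Sum>i<k. (pinned_mean_size b g l (Vs i) (Es i) u True - 1)
                    - pinned_mean_size b g l (Vs i) (Es i) u False)"
    unfolding mag_gap_eq_pinned_mean_size[OF Z] branches(2) sum_subtractf by simp
  also have "\<dots> = 1 + (\<Sum>i<k. mag_gap b g l (Vs i) (Es i) u - 1)"
    by (intro arg_cong[where f = "\<lambda>s. 1 + s"] sum.cong) (simp_all add: mag_gap_eq_pinned_mean_size[OF Zi])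
  finally show "mag_gap b g l VH EH u = 1 + (\<Sum>i<k. mag_gap b g l (Vs i) (Es i) u - 1)" .
qed

lemma eff_field_mag_gap_pendant_edge:
  fixes b g l :: real
  assumes G: "simple_graph V2 E2" and u: "u \<in> V2" and r: "r \<notin> V2" "r \<noteq> u"
    and af: "antiferro b g" and l: "l > 0"
  defines "V \<equiv> {r, u} \<union> V2" and "E \<equiv> {{r, u}} \<union> E2"
  shows "eff_field b g l V E r = (1 + g * l * eff_field b g l V2 E2 u) / (b + l * eff_field b g l V2 E2 u)"
    and "mag_gap b g l V E r = 1 - omega b g (eff_field b g l V E r) * mag_gap b g l V2 E2 u"
proof -
  have b: "b \<ge> 0" and g: "g \<ge> 0" and bg: "b * g < 1"
    using af unfolding antiferro_def by auto
  define h where "h = pinned_partition_fn b g l V2 E2 u"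
  define m where "m = pinned_mean_size b g l V2 E2 u"
  have h: "h True > 0" "h False > 0"
    unfolding h_def using pinned_partition_fn_pos[OF G u af l] by auto
  have "l \<noteq> 0" "pinned_partition_fn b g l V2 E2 u True \<noteq> 0" "pinned_partition_fn b g l V2 E2 u False \<noteq> 0"
    using l h unfolding h_def by simp_all
  note pendant = pinned_pendant_edge[OF G u r this, folded V_def E_def h_def m_def]
  note algebra = pendant_edge_algebra[OF b g bg l h(2) h(1)]
  have "simple_graph V E" and "r \<in> V"
    using G r(2) unfolding V_def E_def simple_graph_def by auto
  then have Z: "partition_fn b g l V E \<noteq> 0" "partition_fn b g l V2 E2 \<noteq> 0"
    using partition_fn_pos[OF _ _ af l, of V E r] partition_fn_pos[OF G u af l] by simp_all
  have R2: "eff_field b g l V2 E2 u = h True / h False"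
    unfolding h_def by (rule eff_field_eq_pinned_partition_fn[OF Z(2)])
  have R: "eff_field b g l V E r = (1 + g * (l * (h True / h False))) / (b + l * (h True / h False))"
    unfolding eff_field_eq_pinned_partition_fn[OF Z(1)] pendant(1,2) algebra(1) ..
  then show "eff_field b g l V E r
      = (1 + g * l * eff_field b g l V2 E2 u) / (b + l * eff_field b g l V2 E2 u)"
    unfolding R2 by (simp add: mult.assoc)
  have "mag_gap b g l V E r = 1 - omega b g (eff_field b g l V E r) * (m True - m False)"
    unfolding mag_gap_eq_pinned_mean_size[OF Z(1)] pendant(3,4) algebra(2) R ..
  also have "m True - m False = mag_gap b g l V2 E2 u"
    unfolding m_def by (rule mag_gap_eq_pinned_mean_size[OF Z(2), symmetric])
  finally show "mag_gap b g l V E r = 1 - omega b g (eff_field b g l V E r) * mag_gap b g l V2 E2 u" .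
qed

theorem lemma3p1:
  fixes b g l :: real and k :: nat
    and Vs :: "nat \<Rightarrow> 'a set" and Es :: "nat \<Rightarrow> 'a set set"
    and V :: "'a set" and E :: "'a set set" and r u :: 'a
  assumes af: "antiferro b g" and lpos: "l > 0"
    and trees: "\<And>i. i < k \<Longrightarrow> rooted_tree (Vs i) (Es i) u"
    and disj: "\<And>i j. i < k \<Longrightarrow> j < k \<Longrightarrow> i \<noteq> j \<Longrightarrow> Vs i \<inter> Vs j = {u}"
    and r_new: "\<And>i. i < k \<Longrightarrow> r \<notin> Vs i" and ru: "r \<noteq> u"
    and V_def: "V = {r, u} \<union> (\<Union>i<k. Vs i)"
    and E_def: "E = {{r, u}} \<union> (\<Union>i<k. Es i)"
  shows "(eff_field b g l V E r =
           (1 + g * l * (\<Prod>i<k. eff_field b g l (Vs i) (Es i) u))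
           / (b + l * (\<Prod>i<k. eff_field b g l (Vs i) (Es i) u)))
    \<and> (mag_gap b g l V E r =
           1 - omega b g (eff_field b g l V E r)
               * (1 + (\<Sum>i<k. mag_gap b g l (Vs i) (Es i) u - 1)))
    \<and> (g < eff_field b g l V E r \<and> (b \<noteq> 0 \<longrightarrow> eff_field b g l V E r < 1 / b))
    \<and> (0 < omega b g (eff_field b g l V E r) \<and> omega b g (eff_field b g l V E r) < 1)"
proof -
  have G: "\<And>i. i < k \<Longrightarrow> simple_graph (Vs i) (Es i)" and u: "\<And>i. i < k \<Longrightarrow> u \<in> Vs i"
    using trees unfolding rooted_tree_def by auto
  define VH where "VH = insert u (\<Union>i<k. Vs i)"
  define EH where "EH = (\<Union>i<k. Es i)"
  have GH: "simple_graph VH EH" "u \<in> VH" "r \<notin> VH"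
    unfolding VH_def EH_def using G r_new ru by (auto intro: simple_graph_UN)
  have VE: "V = {r, u} \<union> VH" "E = {{r, u}} \<union> EH"
    unfolding V_def E_def VH_def EH_def by auto
  have branches: "eff_field b g l VH EH u = (\<Prod>i<k. eff_field b g l (Vs i) (Es i) u)"
    "mag_gap b g l VH EH u = 1 + (\<Sum>i<k. mag_gap b g l (Vs i) (Es i) u - 1)"
    using eff_field_mag_gap_branches[where Vs = Vs and Es = Es and k = k and u = u, OF af lpos G u disj]
    unfolding VH_def EH_def by simp_all
  note pendant = eff_field_mag_gap_pendant_edge[OF GH ru af lpos, folded VE]
  have "l * eff_field b g l VH EH u > 0"
    using eff_field_pos[OF GH(1,2) af lpos] lpos by simp
  note bounds = fraction_bounds[OF af this, of "eff_field b g l V E r"]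
  show ?thesis
    using pendant bounds unfolding branches by (simp add: mult.assoc)
qed

end
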